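(* Let $\gamma\in(0,1)$. There is a constant $c_3>0$, a polynomial in $\|D_x\|_\infty,\|D_u\|_\infty,\kappa,\gamma^{-1},\bar w$ (independent of $n,m,H,t$), such that with $\epsilon_3(H)=c_3\sqrt n(1-\gamma)^H$ the following holds. For any $K\in\mathcal K$, the disturbance-action parameter $\bm M(K)=(M^{[1]}(K),\dots,M^{[H]}(K))$ defined by $M^{[i]}(K)=(\mathbb K-K)(A-BK)^{i-1}$ belongs to $\mathcal M$, and for all $t$ and all disturbance sequences in $\mathcal W$, $$\max\big(\|D_x[x_t^K-x_t^{\bm M(K)}]\|_\infty,\ \|D_u[u_t^K-u_t^{\bm M(K)}]\|_\infty\big)\le\epsilon_3(H),$$ where $(x_t^K,u_t^K)$ is produced by the controller $u_t=-Kx_t$ and $(x_t^{\bm M(K)},u_t^{\bm M(K)})$ by the disturbance-action policy with constant parameter $\bm M(K)$, under the same disturbances. Hence $\bm M(K)$ is $\epsilon_3(H)$-loosely safe.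
   Context: System $x_{t+1}=Ax_t+Bu_t+w_t$, $A\in\mathbb R^{n\times n}$, $B\in\mathbb R^{n\times m}$, $x_0=0$, $t=0,\dots,T$; $\mathcal W=\{w:\|w\|_\infty\le\bar w\}$, $\bar w>0$. $\mathcal X=\{x:D_xx\le d_x\}$, $\mathcal U=\{u:D_uu\le d_u\}$ with $D_x\in\mathbb R^{k_x\times n}$, $D_u\in\mathbb R^{k_u\times m}$ (entrywise inequalities; $\mathds1$ all-ones vector; matrix $\|\cdot\|_\infty$ = max absolute row sum, $\|\cdot\|_2$ spectral norm). $K$ is $(\kappa,\gamma)$-strongly stable ($\kappa\ge1$) if $A-BK=Q^{-1}LQ$ with $\|L\|_2\le1-\gamma$, $\max(\|Q\|_2,\|Q^{-1}\|_2,\|K\|_2)\le\kappa$. A controller is safe if $x_t\in\mathcal X$, $u_t\in\mathcal U$ for all $0\le t\le T$ and all disturbance sequences in $\mathcal W$, and $\epsilon$-loosely safe if $D_xx_t\le d_x+\epsilon\mathds1$ and $D_uu_t\le d_u+\epsilon\mathds1$ for all such $t$ and disturbances. $\mathcal K$ = set of $K$ such that $u_t=-Kx_t$ is safe and $K$ is $(\kappa,\gamma)$-strongly stable. Fix a $(\kappa,\gamma)$-strongly stable $\mathbb K$. Disturbance-action policy with parameter $\bm M=(M^{[1]},\dots,M^{[H]})$: $u_t=-\mathbb Kx_t+\sum_{i=1}^HM^{[i]}w_{t-i}$ with $w_s=0$ for $s<0$. $\mathcal M=\{\bm M:\|M^{[i]}\|_\infty\le2\sqrt n\kappa^3(1-\gamma)^{i-1},\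 1\le i\le H\}$. *)

theory Defs
  imports Complex_Main "Jordan_Normal_Form.Matrix"
begin

(* Vectors/matrices are Jordan_Normal_Form 'real vec' / 'real mat' with explicit dimensions,
   so that the dimensions n, m, k_x, k_u can be quantified inside the statement. *)

definition vnorm_inf :: "real vec \<Rightarrow> real" where
  "vnorm_inf v = Max (insert 0 {\<bar>v $ i\<bar> | i. i < dim_vec v})"

definition vnorm2 :: "real vec \<Rightarrow> real" where
  "vnorm2 v = sqrt (\<Sum>i<dim_vec v. (v $ i)^2)"

definition mnorm_inf :: "real mat \<Rightarrow> real" where
  "mnorm_inf M = Max (insert 0 {(\<Sum>j<dim_col M. \<bar>M $$ (i, j)\<bar>) | i. i < dim_row M})"

definition mnorm2 :: "real mat \<Rightarrow> real" where
  "mnorm2 M = Sup {vnorm2 (M *\<^sub>v x) | x. x \<in> carrier_vec (dim_col M) \<and> vnorm2 x \<le> 1}"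

definition vec_le :: "real vec \<Rightarrow> real vec \<Rightarrow> bool" where
  "vec_le v w \<longleftrightarrow> dim_vec v = dim_vec w \<and> (\<forall>i < dim_vec v. v $ i \<le> w $ i)"

definition vec_shift :: "real vec \<Rightarrow> real \<Rightarrow> real vec" where
  "vec_shift d e = vec (dim_vec d) (\<lambda>i. d $ i + e)"

definition strongly_stable :: "real \<Rightarrow> real \<Rightarrow> real mat \<Rightarrow> real mat \<Rightarrow> real mat \<Rightarrow> bool" where
  "strongly_stable \<kappa> \<gamma> A B K \<longleftrightarrow>
     (\<exists>Q Qi L. Q \<in> carrier_mat (dim_row A) (dim_row A) \<and> Qi \<in> carrier_mat (dim_row A) (dim_row A)
        \<and> L \<in> carrier_mat (dim_row A) (dim_row A)
        \<and> Q * Qi = 1\<^sub>m (dim_row A) \<and> Qi * Q = 1\<^sub>m (dim_row A)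
        \<and> A - B * K = Qi * L * Q
        \<and> mnorm2 L \<le> 1 - \<gamma>
        \<and> mnorm2 Q \<le> \<kappa> \<and> mnorm2 Qi \<le> \<kappa> \<and> mnorm2 K \<le> \<kappa>)"

definition admissible_dist :: "nat \<Rightarrow> real \<Rightarrow> (nat \<Rightarrow> real vec) \<Rightarrow> bool" where
  "admissible_dist n wbar w \<longleftrightarrow> (\<forall>t. w t \<in> carrier_vec n \<and> vnorm_inf (w t) \<le> wbar)"

fun lin_state :: "real mat \<Rightarrow> real mat \<Rightarrow> real mat \<Rightarrow> (nat \<Rightarrow> real vec) \<Rightarrow> nat \<Rightarrow> real vec" where
  "lin_state A B K w 0 = 0\<^sub>v (dim_row A)"
| "lin_state A B K w (Suc t) =
     A *\<^sub>v lin_state A B K w t + B *\<^sub>v (- (K *\<^sub>v lin_state A B K w t)) + w t"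

definition lin_input :: "real mat \<Rightarrow> real mat \<Rightarrow> real mat \<Rightarrow> (nat \<Rightarrow> real vec) \<Rightarrow> nat \<Rightarrow> real vec" where
  "lin_input A B K w t = - (K *\<^sub>v lin_state A B K w t)"

(* disturbance-action input: u = -Kb x + \<Sum>_{i=1}^H M^[i] w_{t-i}, with w_s = 0 for s < 0 *)
definition dap_u :: "real mat \<Rightarrow> (nat \<Rightarrow> real mat) \<Rightarrow> nat \<Rightarrow> (nat \<Rightarrow> real vec) \<Rightarrow> nat \<Rightarrow> real vec \<Rightarrow> real vec" where
  "dap_u Kb M H w t x =
     vec (dim_row Kb) (\<lambda>j. (- (Kb *\<^sub>v x)) $ j + (\<Sum>i\<in>{1..H}. if i \<le> t then (M i *\<^sub>v w (t - i)) $ j else 0))"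

fun dap_state :: "real mat \<Rightarrow> real mat \<Rightarrow> real mat \<Rightarrow> (nat \<Rightarrow> real mat) \<Rightarrow> nat \<Rightarrow> (nat \<Rightarrow> real vec) \<Rightarrow> nat \<Rightarrow> real vec" where
  "dap_state A B Kb M H w 0 = 0\<^sub>v (dim_row A)"
| "dap_state A B Kb M H w (Suc t) =
     A *\<^sub>v dap_state A B Kb M H w t + B *\<^sub>v dap_u Kb M H w t (dap_state A B Kb M H w t) + w t"

definition dap_input :: "real mat \<Rightarrow> real mat \<Rightarrow> real mat \<Rightarrow> (nat \<Rightarrow> real mat) \<Rightarrow> nat \<Rightarrow> (nat \<Rightarrow> real vec) \<Rightarrow> nat \<Rightarrow> real vec" where
  "dap_input A B Kb M H w t = dap_u Kb M H w t (dap_state A B Kb M H w t)"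

definition lin_safe :: "nat \<Rightarrow> real \<Rightarrow> real mat \<Rightarrow> real vec \<Rightarrow> real mat \<Rightarrow> real vec
      \<Rightarrow> real mat \<Rightarrow> real mat \<Rightarrow> real mat \<Rightarrow> bool" where
  "lin_safe T wbar Dx dx Du du A B K \<longleftrightarrow>
     (\<forall>w. admissible_dist (dim_row A) wbar w \<longrightarrow> (\<forall>t\<le>T.
        vec_le (Dx *\<^sub>v lin_state A B K w t) dx \<and> vec_le (Du *\<^sub>v lin_input A B K w t) du))"

definition dap_loosely_safe :: "real \<Rightarrow> nat \<Rightarrow> real \<Rightarrow> real mat \<Rightarrow> real vec \<Rightarrow> real mat \<Rightarrow> real vec
      \<Rightarrow> real mat \<Rightarrow> real mat \<Rightarrow> real mat \<Rightarrow> (nat \<Rightarrow> real mat) \<Rightarrow> nat \<Rightarrow> bool" where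
  "dap_loosely_safe \<epsilon> T wbar Dx dx Du du A B Kb M H \<longleftrightarrow>
     (\<forall>w. admissible_dist (dim_row A) wbar w \<longrightarrow> (\<forall>t\<le>T.
        vec_le (Dx *\<^sub>v dap_state A B Kb M H w t) (vec_shift dx \<epsilon>)
      \<and> vec_le (Du *\<^sub>v dap_input A B Kb M H w t) (vec_shift du \<epsilon>)))"

definition in_M :: "nat \<Rightarrow> nat \<Rightarrow> real \<Rightarrow> real \<Rightarrow> nat \<Rightarrow> (nat \<Rightarrow> real mat) \<Rightarrow> bool" where
  "in_M n m \<kappa> \<gamma> H M \<longleftrightarrow>
     (\<forall>i\<in>{1..H}. M i \<in> carrier_mat m n \<and> mnorm_inf (M i) \<le> 2 * sqrt n * \<kappa>^3 * (1 - \<gamma>)^(i - 1))"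

definition M_of_K :: "real mat \<Rightarrow> real mat \<Rightarrow> real mat \<Rightarrow> real mat \<Rightarrow> nat \<Rightarrow> real mat" where
  "M_of_K A B Kb K i = (Kb - K) * ((A - B * K) ^\<^sub>m (i - 1))"

end

theory Submission
  imports Defs "HOL-Analysis.L2_Norm"
begin

text \<open>Write F = A - B K and G = A - B Kb. Under u = -K x the state is x(t) = sum over i < t of
  F^i w(t-1-i), and the disturbance-action policy with parameter M(K) is exactly
  u = -Kb x + (Kb - K) P(t), where P(t) is this sum truncated to i < H. Hence the truncation
  error x(t) - P(t) = F^H x(t-H) is of order (1-\<gamma>)^H, and the state gap e between the two
  controllers obeys e(t+1) = G e(t) + (F - G)(x(t) - P(t)). Strong stability says that F and G
  contract by 1 - \<gamma> in a norm |Q x| within a factor \<kappa> of the Euclidean one, so a recursion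
  driven by inputs of size D stays below \<kappa>^2 D / \<gamma>. Both gaps are therefore of order
  sqrt n (1-\<gamma>)^H with a constant polynomial in \<kappa>, 1/\<gamma>, wbar and the constraint norms,
  and loose safety follows from the safety of K.\<close>

lemma vnorm2_eq_L2_set: "vnorm2 v = L2_set (\<lambda>i. v $ i) {..<dim_vec v}"
  unfolding vnorm2_def L2_set_def by simp

lemma vnorm2_nonneg [simp]: "0 \<le> vnorm2 v"
  unfolding vnorm2_def by (simp add: sum_nonneg)

lemma vnorm2_zero_vec [simp]: "vnorm2 (0\<^sub>v n) = 0"
  unfolding vnorm2_def by simp

lemma vnorm2_uminus [simp]: "vnorm2 (- v) = vnorm2 v"
  unfolding vnorm2_def by simp

lemma vnorm2_smult: "vnorm2 (c \<cdot>\<^sub>v v) = \<bar>c\<bar> * vnorm2 v"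
proof -
  have "vnorm2 (c \<cdot>\<^sub>v v) = L2_set (\<lambda>i. \<bar>c\<bar> * v $ i) {..<dim_vec v}"
    unfolding vnorm2_def L2_set_def by (simp add: power_mult_distrib)
  then show ?thesis
    by (simp add: L2_set_right_distrib vnorm2_eq_L2_set)
qed

lemma vnorm2_add_le:
  assumes "dim_vec a = dim_vec b"
  shows "vnorm2 (a + b) \<le> vnorm2 a + vnorm2 b"
proof -
  have "vnorm2 (a + b) = L2_set (\<lambda>i. a $ i + b $ i) {..<dim_vec b}"
    unfolding vnorm2_eq_L2_set using assms by (intro L2_set_cong) auto
  then show ?thesis
    using assms L2_set_triangle_ineq by (metis vnorm2_eq_L2_set)
qed

lemma vnorm2_diff_le:
  assumes "dim_vec a = dim_vec b"
  shows "vnorm2 (a - b) \<le> vnorm2 a + vnorm2 b"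
proof -
  have "a - b = a + (- b)"
    using assms by (intro eq_vecI) auto
  then show ?thesis
    using vnorm2_add_le[of a "- b"] assms by simp
qed

lemma abs_index_le_vnorm2: "i < dim_vec v \<Longrightarrow> \<bar>v $ i\<bar> \<le> vnorm2 v"
  using member_le_L2_set[of "{..<dim_vec v}" i "\<lambda>i. \<bar>v $ i\<bar>"]
  by (simp add: vnorm2_eq_L2_set L2_set_def)

lemma vnorm2_eq_0_imp_zero_vec: "vnorm2 v = 0 \<Longrightarrow> v = 0\<^sub>v (dim_vec v)"
  using abs_index_le_vnorm2[of _ v] by (intro eq_vecI) force+

lemma vnorm2_le_sqrt_dim_mult:
  assumes "\<And>i. i < dim_vec v \<Longrightarrow> \<bar>v $ i\<bar> \<le> b" and "0 \<le> b"
  shows "vnorm2 v \<le> sqrt (dim_vec v) * b"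
proof -
  have "(\<Sum>i<dim_vec v. (v $ i)^2) \<le> (\<Sum>i<dim_vec v. b^2)"
    using assms by (intro sum_mono) (metis abs_le_square_iff abs_of_nonneg lessThan_iff)
  then have "vnorm2 v \<le> sqrt (dim_vec v * b^2)"
    unfolding vnorm2_def by simp
  then show ?thesis
    using assms(2) by (simp add: real_sqrt_mult)
qed

lemma abs_index_le_vnorm_inf: "i < dim_vec v \<Longrightarrow> \<bar>v $ i\<bar> \<le> vnorm_inf v"
  unfolding vnorm_inf_def by (intro Max_ge) auto

lemma vnorm_inf_nonneg [simp]: "0 \<le> vnorm_inf v"
  unfolding vnorm_inf_def by (intro Max_ge) auto

lemma vnorm_inf_leI:
  assumes "\<And>i. i < dim_vec v \<Longrightarrow> \<bar>v $ i\<bar> \<le> b" and "0 \<le> b"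
  shows "vnorm_inf v \<le> b"
  unfolding vnorm_inf_def using assms by (intro Max.boundedI) auto

lemma vnorm_inf_le_vnorm2: "vnorm_inf v \<le> vnorm2 v"
  by (intro vnorm_inf_leI abs_index_le_vnorm2) auto

lemma vnorm2_le_sqrt_dim_vnorm_inf: "vnorm2 v \<le> sqrt (dim_vec v) * vnorm_inf v"
  by (intro vnorm2_le_sqrt_dim_mult abs_index_le_vnorm_inf vnorm_inf_nonneg)

lemma mnorm_inf_nonneg [simp]: "0 \<le> mnorm_inf M"
  unfolding mnorm_inf_def by (intro Max_ge) auto

lemma row_sum_le_mnorm_inf:
  "i < dim_row M \<Longrightarrow> (\<Sum>j<dim_col M. \<bar>M $$ (i, j)\<bar>) \<le> mnorm_inf M"
  unfolding mnorm_inf_def by (intro Max_ge) auto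

lemma index_mult_mat_vec_sum:
  "i < dim_row M \<Longrightarrow> dim_vec v = dim_col M \<Longrightarrow> (M *\<^sub>v v) $ i = (\<Sum>j<dim_col M. M $$ (i, j) * v $ j)"
  by (simp add: scalar_prod_def atLeast0LessThan)

lemma vnorm_inf_mult_mat_vec_le:
  assumes "v \<in> carrier_vec (dim_col M)"
  shows "vnorm_inf (M *\<^sub>v v) \<le> mnorm_inf M * vnorm_inf v"
proof (intro vnorm_inf_leI)
  fix i assume "i < dim_vec (M *\<^sub>v v)"
  then have i: "i < dim_row M" by simp
  have "\<bar>(M *\<^sub>v v) $ i\<bar> \<le> (\<Sum>j<dim_col M. \<bar>M $$ (i, j)\<bar> * vnorm_inf v)"
    using i assms unfolding index_mult_mat_vec_sum[OF i carrier_vecD[OF assms]]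
    by (intro order.trans[OF sum_abs] sum_mono)
      (auto simp: abs_mult intro!: mult_left_mono abs_index_le_vnorm_inf)
  also have "\<dots> \<le> mnorm_inf M * vnorm_inf v"
    unfolding sum_distrib_right[symmetric]
    using i by (intro mult_right_mono row_sum_le_mnorm_inf) auto
  finally show "\<bar>(M *\<^sub>v v) $ i\<bar> \<le> mnorm_inf M * vnorm_inf v" .
qed simp

lemma vnorm_inf_mult_mat_vec_le_scaled:
  assumes "v \<in> carrier_vec (dim_col M)" and "vnorm2 v \<le> c * s" and "mnorm_inf M * c \<le> b" and "0 \<le> s"
  shows "vnorm_inf (M *\<^sub>v v) \<le> b * s"
proof -
  have "vnorm_inf (M *\<^sub>v v) \<le> mnorm_inf M * vnorm2 v"
    using vnorm_inf_mult_mat_vec_le[OF assms(1)] vnorm_inf_le_vnorm2[of v]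
    by (meson mnorm_inf_nonneg mult_left_mono order_trans)
  also have "\<dots> \<le> (mnorm_inf M * c) * s"
    using mult_left_mono[OF assms(2) mnorm_inf_nonneg] by (simp only: mult.assoc)
  also have "\<dots> \<le> b * s"
    using assms(3,4) by (rule mult_right_mono)
  finally show ?thesis .
qed

definition op_norm_le :: "real mat \<Rightarrow> real \<Rightarrow> bool" where
  "op_norm_le M c \<longleftrightarrow> (\<forall>v \<in> carrier_vec (dim_col M). vnorm2 (M *\<^sub>v v) \<le> c * vnorm2 v)"

lemma op_norm_leD: "op_norm_le M c \<Longrightarrow> v \<in> carrier_vec (dim_col M) \<Longrightarrow> vnorm2 (M *\<^sub>v v) \<le> c * vnorm2 v"
  unfolding op_norm_le_def by blast

lemma op_norm_le_mono: "op_norm_le M c \<Longrightarrow> c \<le> d \<Longrightarrow> op_norm_le M d"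
  unfolding op_norm_le_def by (meson order.trans mult_right_mono vnorm2_nonneg)

lemma vnorm2_mult_mat_vec_le_sum_abs:
  assumes "v \<in> carrier_vec (dim_col M)" and "vnorm2 v \<le> 1"
  shows "vnorm2 (M *\<^sub>v v) \<le> (\<Sum>i<dim_row M. \<Sum>j<dim_col M. \<bar>M $$ (i, j)\<bar>)"
proof -
  have "vnorm2 (M *\<^sub>v v) \<le> (\<Sum>i<dim_row M. \<bar>(M *\<^sub>v v) $ i\<bar>)"
    unfolding vnorm2_eq_L2_set dim_mult_mat_vec by (rule L2_set_le_sum_abs)
  also have "\<dots> \<le> (\<Sum>i<dim_row M. \<Sum>j<dim_col M. \<bar>M $$ (i, j)\<bar>)"
  proof (intro sum_mono)
    fix i assume "i \<in> {..<dim_row M}"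
    then have "\<bar>(M *\<^sub>v v) $ i\<bar> = \<bar>\<Sum>j<dim_col M. M $$ (i, j) * v $ j\<bar>"
      using assms by (subst index_mult_mat_vec_sum) auto
    also have "\<dots> \<le> (\<Sum>j<dim_col M. \<bar>M $$ (i, j)\<bar>)"
      using assms abs_index_le_vnorm2[of _ v]
      by (intro order.trans[OF sum_abs] sum_mono) (force simp: abs_mult intro: mult_left_le)
    finally show "\<bar>(M *\<^sub>v v) $ i\<bar> \<le> (\<Sum>j<dim_col M. \<bar>M $$ (i, j)\<bar>)" .
  qed
  finally show ?thesis .
qed

lemma op_norm_le_mnorm2: "op_norm_le M (mnorm2 M)"
  unfolding op_norm_le_def
proof
  fix v :: "real vec" assume v: "v \<in> carrier_vec (dim_col M)"
  define S where "S = {vnorm2 (M *\<^sub>v x) | x. x \<in> carrier_vec (dim_col M) \<and> vnorm2 x \<le> 1}"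
  have bdd: "bdd_above S"
    unfolding S_def bdd_above_def using vnorm2_mult_mat_vec_le_sum_abs by blast
  show "vnorm2 (M *\<^sub>v v) \<le> mnorm2 M * vnorm2 v"
  proof (cases "vnorm2 v = 0")
    case True
    then have "M *\<^sub>v v = 0\<^sub>v (dim_row M)"
      using vnorm2_eq_0_imp_zero_vec[OF True] v by (intro eq_vecI) (auto simp: scalar_prod_def)
    then show ?thesis using True by simp
  next
    case False
    then have pos: "vnorm2 v > 0" using vnorm2_nonneg[of v] by linarith
    define x where "x = (1 / vnorm2 v) \<cdot>\<^sub>v v"
    have "M *\<^sub>v x = (1 / vnorm2 v) \<cdot>\<^sub>v (M *\<^sub>v v)"
      unfolding x_def using v by (intro mult_mat_vec) auto
    then have "vnorm2 (M *\<^sub>v x) = vnorm2 (M *\<^sub>v v) / vnorm2 v" and "vnorm2 x = 1"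
      using pos by (simp_all add: vnorm2_smult x_def)
    moreover have "x \<in> carrier_vec (dim_col M)"
      using v by (simp add: x_def)
    ultimately have "vnorm2 (M *\<^sub>v v) / vnorm2 v \<in> S"
      unfolding S_def by (intro CollectI exI[of _ x]) simp
    then have "vnorm2 (M *\<^sub>v v) / vnorm2 v \<le> mnorm2 M"
      unfolding mnorm2_def S_def[symmetric] using bdd by (rule cSup_upper)
    then show ?thesis using pos by (simp add: divide_le_eq mult.commute)
  qed
qed

lemma op_norm_le_of_mnorm2_le: "mnorm2 M \<le> c \<Longrightarrow> op_norm_le M c"
  using op_norm_le_mono op_norm_le_mnorm2 by blast

lemma op_norm_le_mult:
  assumes M: "op_norm_le M a" and N: "op_norm_le N b" and dim: "dim_col M = dim_row N"
    and a: "0 \<le> a"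
  shows "op_norm_le (M * N) (a * b)"
  unfolding op_norm_le_def
proof
  fix v :: "real vec" assume "v \<in> carrier_vec (dim_col (M * N))"
  then have v: "v \<in> carrier_vec (dim_col N)" by simp
  have Nv: "N *\<^sub>v v \<in> carrier_vec (dim_col M)"
    using dim by (intro carrier_vecI) simp
  have "(M * N) *\<^sub>v v = M *\<^sub>v (N *\<^sub>v v)"
    using dim v by (intro assoc_mult_mat_vec[of _ _ "dim_row N"]) auto
  also have "vnorm2 \<dots> \<le> a * vnorm2 (N *\<^sub>v v)"
    using op_norm_leD[OF M Nv] .
  also have "\<dots> \<le> a * (b * vnorm2 v)"
    using op_norm_leD[OF N v] a by (rule mult_left_mono)
  finally show "vnorm2 ((M * N) *\<^sub>v v) \<le> a * b * vnorm2 v"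
    by (simp only: mult.assoc)
qed

lemma op_norm_le_diff:
  assumes M: "op_norm_le M a" and N: "op_norm_le N b"
    and carrier: "M \<in> carrier_mat r c" "N \<in> carrier_mat r c"
  shows "op_norm_le (M - N) (a + b)"
  unfolding op_norm_le_def
proof
  fix v :: "real vec" assume "v \<in> carrier_vec (dim_col (M - N))"
  then have v: "v \<in> carrier_vec c" using carrier by simp
  have "(M - N) *\<^sub>v v = M *\<^sub>v v - N *\<^sub>v v"
    using carrier v by (rule minus_mult_distrib_mat_vec)
  then have "vnorm2 ((M - N) *\<^sub>v v) \<le> vnorm2 (M *\<^sub>v v) + vnorm2 (N *\<^sub>v v)"
    using carrier by (simp add: vnorm2_diff_le)
  also have "\<dots> \<le> a * vnorm2 v + b * vnorm2 v"
    using carrier v by (intro add_mono op_norm_leD[OF M] op_norm_leD[OF N]) auto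
  finally show "vnorm2 ((M - N) *\<^sub>v v) \<le> (a + b) * vnorm2 v"
    by (simp add: distrib_right)
qed

lemma op_norm_le_pow:
  assumes "op_norm_le M c" "M \<in> carrier_mat n n" "0 \<le> c"
  shows "op_norm_le (M ^\<^sub>m j) (c ^ j)"
proof (induction j)
  case 0
  show ?case unfolding op_norm_le_def by simp
next
  case (Suc j)
  show ?case
    using op_norm_le_mult[OF Suc assms(1)] assms(2,3) by (simp add: mult.commute)
qed

lemma mnorm_inf_le_sqrt_dim_mult:
  assumes "op_norm_le M c" "0 \<le> c"
  shows "mnorm_inf M \<le> sqrt (dim_col M) * c"
  unfolding mnorm_inf_def
proof (intro Max.boundedI)
  fix a assume "a \<in> insert 0 {\<Sum>j<dim_col M. \<bar>M $$ (i, j)\<bar> | i. i < dim_row M}"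
  then consider "a = 0" | i where "i < dim_row M" "a = (\<Sum>j<dim_col M. \<bar>M $$ (i, j)\<bar>)"
    by auto
  then show "a \<le> sqrt (dim_col M) * c"
  proof cases
    case 1
    then show ?thesis using assms(2) by simp
  next
    case 2
    define s where "s = vec (dim_col M) (\<lambda>j. sgn (M $$ (i, j)))"
    have s: "s \<in> carrier_vec (dim_col M)" unfolding s_def by simp
    have "vnorm2 s \<le> sqrt (dim_vec s) * 1"
      by (intro vnorm2_le_sqrt_dim_mult) (auto simp: s_def abs_sgn_eq)
    then have s_norm: "vnorm2 s \<le> sqrt (dim_col M)"
      by (simp add: s_def)
    \<comment> \<open>the sign vector of row \<open>i\<close> realises its absolute row sum\<close>
    have "a = (M *\<^sub>v s) $ i"
      using 2 by (subst index_mult_mat_vec_sum) (auto simp: s_def intro!: sum.cong, simp add: abs_if sgn_if)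
    also have "\<dots> \<le> vnorm2 (M *\<^sub>v s)"
      using 2 abs_index_le_vnorm2[of i "M *\<^sub>v s"] by simp
    also have "\<dots> \<le> c * vnorm2 s"
      using assms(1) s by (rule op_norm_leD)
    also have "\<dots> \<le> sqrt (dim_col M) * c"
      using mult_left_mono[OF s_norm assms(2)] by (simp only: mult.commute)
    finally show ?thesis .
  qed
qed auto

lemma strongly_stableE:
  assumes "strongly_stable \<kappa> \<gamma> A B K" and "A \<in> carrier_mat n n"
  obtains Q Qi L where "A - B * K \<in> carrier_mat n n" and "similar_mat_wit (A - B * K) L Qi Q"
    and "op_norm_le L (1 - \<gamma>)" and "op_norm_le Q \<kappa>" and "op_norm_le Qi \<kappa>" and "op_norm_le K \<kappa>"
proof -
  obtain Q Qi L where carrier: "Q \<in> carrier_mat n n" "Qi \<in> carrier_mat n n" "L \<in> carrier_mat n n"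
    and inverse: "Q * Qi = 1\<^sub>m n" "Qi * Q = 1\<^sub>m n" and similar: "A - B * K = Qi * L * Q"
    and norms: "mnorm2 L \<le> 1 - \<gamma>" "mnorm2 Q \<le> \<kappa>" "mnorm2 Qi \<le> \<kappa>" "mnorm2 K \<le> \<kappa>"
    using assms(1) unfolding strongly_stable_def carrier_matD(1)[OF assms(2)] by blast
  have F: "A - B * K \<in> carrier_mat n n"
    using carrier unfolding similar by simp
  moreover have "similar_mat_wit (A - B * K) L Qi Q"
    using carrier inverse similar F by (intro similar_mat_witI[of _ _ n])
  ultimately show ?thesis
    using norms by (intro that op_norm_le_of_mnorm2_le)
qed

lemma strongly_stable_gain_op_norm_le:
  "strongly_stable \<kappa> \<gamma> A B K \<Longrightarrow> A \<in> carrier_mat n n \<Longrightarrow> op_norm_le K \<kappa>"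
  by (erule strongly_stableE)

lemma strongly_stable_pow_op_norm_le:
  assumes "strongly_stable \<kappa> \<gamma> A B K" and "A \<in> carrier_mat n n" and "0 \<le> \<kappa>" and "\<gamma> \<le> 1"
  shows "op_norm_le ((A - B * K) ^\<^sub>m j) (\<kappa>\<^sup>2 * (1 - \<gamma>) ^ j)"
proof -
  obtain Q Qi L where F: "A - B * K \<in> carrier_mat n n" and sim: "similar_mat_wit (A - B * K) L Qi Q"
    and L: "op_norm_le L (1 - \<gamma>)" and Q: "op_norm_le Q \<kappa>" and Qi: "op_norm_le Qi \<kappa>"
    using strongly_stableE[OF assms(1,2)] .
  have carrier: "L \<in> carrier_mat n n" "Q \<in> carrier_mat n n" "Qi \<in> carrier_mat n n"
    using similar_mat_witD2[OF F sim] by auto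
  have "op_norm_le (Qi * L ^\<^sub>m j * Q) (\<kappa> * (1 - \<gamma>) ^ j * \<kappa>)"
    using carrier assms(3,4)
    by (intro op_norm_le_mult[OF op_norm_le_mult[OF Qi op_norm_le_pow[OF L]]] Q) auto
  then show ?thesis
    using similar_mat_wit_pow_id[OF sim] by (simp add: power2_eq_square mult_ac)
qed

lemma strongly_stable_closed_loop_op_norm_le:
  assumes "strongly_stable \<kappa> \<gamma> A B K" and "A \<in> carrier_mat n n"
    and "0 \<le> \<kappa>" and "0 \<le> \<gamma>" and "\<gamma> \<le> 1"
  shows "op_norm_le (A - B * K) (\<kappa>\<^sup>2)"
proof -
  have "op_norm_le ((A - B * K) ^\<^sub>m 1) (\<kappa>\<^sup>2 * (1 - \<gamma>) ^ 1)"
    using assms by (intro strongly_stable_pow_op_norm_le) auto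
  moreover have "A - B * K \<in> carrier_mat n n"
    using assms(1,2) by (rule strongly_stableE)
  ultimately have "op_norm_le (A - B * K) (\<kappa>\<^sup>2 * (1 - \<gamma>))"
    by simp
  then show ?thesis
    by (rule op_norm_le_mono) (use assms(4) in \<open>simp add: mult_left_le\<close>)
qed

lemma contraction_recursion_bound:
  fixes a :: "nat \<Rightarrow> real"
  assumes "a 0 \<le> c / \<gamma>" and "\<And>t. a (Suc t) \<le> (1 - \<gamma>) * a t + c" and "0 < \<gamma>" and "\<gamma> \<le> 1"
  shows "a t \<le> c / \<gamma>"
proof (induction t)
  case (Suc t)
  have "(1 - \<gamma>) * a t \<le> (1 - \<gamma>) * (c / \<gamma>)"
    using Suc assms(4) by (intro mult_left_mono) auto
  then have "a (Suc t) \<le> (1 - \<gamma>) * (c / \<gamma>) + c"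
    using assms(2)[of t] by linarith
  also have "\<dots> = c / \<gamma>"
    using assms(3) by (simp add: field_simps)
  finally show ?case .
qed (use assms(1) in simp)

lemma similar_mat_wit_mult_mat_vec:
  assumes F: "F \<in> carrier_mat n n" and sim: "similar_mat_wit F L Qi Q" and x: "x \<in> carrier_vec n"
  shows "Qi *\<^sub>v (Q *\<^sub>v x) = x" and "Q *\<^sub>v (F *\<^sub>v x) = L *\<^sub>v (Q *\<^sub>v x)"
proof -
  note wit = similar_mat_witD2[OF F sim]
  have Q_Qi: "Q *\<^sub>v (Qi *\<^sub>v y) = y" if "y \<in> carrier_vec n" for y
    using that wit by (simp flip: assoc_mult_mat_vec)
  show "Qi *\<^sub>v (Q *\<^sub>v x) = x"
    using x wit by (simp flip: assoc_mult_mat_vec)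
  have "F *\<^sub>v x = (Qi * L) *\<^sub>v (Q *\<^sub>v x)"
    unfolding wit(3) using wit x by (intro assoc_mult_mat_vec) auto
  also have "\<dots> = Qi *\<^sub>v (L *\<^sub>v (Q *\<^sub>v x))"
    using wit x by (intro assoc_mult_mat_vec) auto
  finally show "Q *\<^sub>v (F *\<^sub>v x) = L *\<^sub>v (Q *\<^sub>v x)"
    using Q_Qi wit x by simp
qed

lemma strongly_stable_driven_bound:
  assumes ss: "strongly_stable \<kappa> \<gamma> A B K" and A: "A \<in> carrier_mat n n"
    and \<kappa>: "0 \<le> \<kappa>" and \<gamma>: "0 < \<gamma>" "\<gamma> \<le> 1"
    and e_0: "e 0 = 0\<^sub>v n" and e_Suc: "\<And>t. e (Suc t) = (A - B * K) *\<^sub>v e t + d t"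
    and d: "\<And>t. d t \<in> carrier_vec n" and D: "\<And>t. vnorm2 (d t) \<le> D"
  shows "vnorm2 (e t) \<le> \<kappa>\<^sup>2 * D / \<gamma>"
proof -
  obtain Q Qi L where F: "A - B * K \<in> carrier_mat n n" and sim: "similar_mat_wit (A - B * K) L Qi Q"
    and L: "op_norm_le L (1 - \<gamma>)" and Q: "op_norm_le Q \<kappa>" and Qi: "op_norm_le Qi \<kappa>"
    using strongly_stableE[OF ss A] .
  have carrier: "L \<in> carrier_mat n n" "Q \<in> carrier_mat n n" "Qi \<in> carrier_mat n n"
    using similar_mat_witD2[OF F sim] by auto
  have e: "e s \<in> carrier_vec n" for s
    by (induction s) (use F d in \<open>simp_all add: e_0 e_Suc\<close>)
  \<comment> \<open>in the coordinates \<open>Q x\<close> the closed loop is the contraction \<open>L\<close>\<close>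
  have Qe: "vnorm2 (Q *\<^sub>v e s) \<le> \<kappa> * D / \<gamma>" for s
  proof (rule contraction_recursion_bound[OF _ _ \<gamma>])
    have "0 \<le> \<kappa> * D / \<gamma>"
      using \<kappa> \<gamma> order_trans[OF vnorm2_nonneg D] by simp
    then show "vnorm2 (Q *\<^sub>v e 0) \<le> \<kappa> * D / \<gamma>"
      using op_norm_leD[OF Q, of "0\<^sub>v n"] carrier by (simp add: e_0)
    fix s
    have "Q *\<^sub>v e (Suc s) = L *\<^sub>v (Q *\<^sub>v e s) + Q *\<^sub>v d s"
      using carrier F e d similar_mat_wit_mult_mat_vec(2)[OF F sim e]
      by (simp add: e_Suc mult_add_distrib_mat_vec)
    also have "vnorm2 \<dots> \<le> (1 - \<gamma>) * vnorm2 (Q *\<^sub>v e s) + \<kappa> * D"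
      using carrier e d D \<kappa>
      by (intro order.trans[OF vnorm2_add_le] add_mono op_norm_leD[OF L]
          order.trans[OF op_norm_leD[OF Q]] mult_left_mono) auto
    finally show "vnorm2 (Q *\<^sub>v e (Suc s)) \<le> (1 - \<gamma>) * vnorm2 (Q *\<^sub>v e s) + \<kappa> * D" .
  qed
  have "vnorm2 (e t) \<le> \<kappa> * vnorm2 (Q *\<^sub>v e t)"
    using op_norm_leD[OF Qi, of "Q *\<^sub>v e t"] similar_mat_wit_mult_mat_vec(1)[OF F sim e]
      mult_mat_vec_carrier[OF carrier(2) e] carrier
    by simp
  also have "\<dots> \<le> \<kappa> * (\<kappa> * D / \<gamma>)"
    using Qe \<kappa> by (rule mult_left_mono)
  finally show ?thesis
    by (simp add: power2_eq_square)
qed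

lemma mult_mat_vec_zero_vec: "M \<in> carrier_mat r c \<Longrightarrow> M *\<^sub>v 0\<^sub>v c = 0\<^sub>v r"
  by (intro eq_vecI) (auto simp: scalar_prod_def)

lemma add_minus_cancel_vec:
  fixes a b :: "'a :: group_add vec"
  shows "a \<in> carrier_vec n \<Longrightarrow> b \<in> carrier_vec n \<Longrightarrow> a + b - b = a"
  by (intro eq_vecI) auto

lemma mult_mat_vec_uminus:
  fixes M :: "'a :: ring mat"
  assumes "v \<in> carrier_vec (dim_col M)"
  shows "M *\<^sub>v (- v) = - (M *\<^sub>v v)"
proof (intro eq_vecI)
  fix i assume "i < dim_vec (- (M *\<^sub>v v))"
  then show "(M *\<^sub>v (- v)) $ i = (- (M *\<^sub>v v)) $ i"
    using assms scalar_prod_uminus_right[of "row M i" v] by simp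
qed simp

lemma closed_loop_mult_mat_vec:
  fixes A B M :: "real mat"
  assumes "A \<in> carrier_mat n n" "B \<in> carrier_mat n m" "M \<in> carrier_mat m n" "v \<in> carrier_vec n"
  shows "(A - B * M) *\<^sub>v v = A *\<^sub>v v - B *\<^sub>v (M *\<^sub>v v)"
proof -
  have "(A - B * M) *\<^sub>v v = A *\<^sub>v v - (B * M) *\<^sub>v v"
    by (rule minus_mult_distrib_mat_vec[OF assms(1) mult_carrier_mat[OF assms(2,3)] assms(4)])
  then show ?thesis
    using assoc_mult_mat_vec[OF assms(2-4)] by simp
qed

text \<open>\<open>trunc_state F h w t\<close> is the sum of F^i w(t-1-i) over i < min h t: the part of the
  state at time t of x(s+1) = F x(s) + w(s) that is due to the last h disturbances.\<close>

fun trunc_state :: "real mat \<Rightarrow> nat \<Rightarrow> (nat \<Rightarrow> real vec) \<Rightarrow> nat \<Rightarrow> real vec" where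
  "trunc_state F 0 w t = 0\<^sub>v (dim_row F)"
| "trunc_state F (Suc h) w t =
     trunc_state F h w t + (if h < t then F ^\<^sub>m h *\<^sub>v w (t - Suc h) else 0\<^sub>v (dim_row F))"

lemma trunc_state_carrier:
  assumes "F \<in> carrier_mat n n" and "\<And>t. w t \<in> carrier_vec n"
  shows "trunc_state F h w t \<in> carrier_vec n"
proof -
  have "F ^\<^sub>m i *\<^sub>v w s \<in> carrier_vec n" for i s
    using assms by (metis mult_mat_vec_carrier pow_carrier_mat)
  then show ?thesis
    using assms(1) by (induction h) auto
qed

lemma trunc_state_saturate:
  assumes "F \<in> carrier_mat n n" and "\<And>t. w t \<in> carrier_vec n" and "t \<le> h"
  shows "trunc_state F h w t = trunc_state F t w t"
  using assms(3)
proof (induction h)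
  case (Suc h)
  then show ?case
    using trunc_state_carrier[OF assms(1,2)] assms(1) by (cases "t = Suc h") auto
qed simp

context
  fixes A B K :: "real mat" and n m :: nat and w :: "nat \<Rightarrow> real vec"
  assumes A: "A \<in> carrier_mat n n" and B: "B \<in> carrier_mat n m" and K: "K \<in> carrier_mat m n"
    and w: "\<And>t. w t \<in> carrier_vec n"
begin

lemma closed_loop_carrier: "A - B * K \<in> carrier_mat n n"
  using minus_carrier_mat[OF mult_carrier_mat[OF B K]] .

lemma closed_loop_pow_mult_carrier: "v \<in> carrier_vec n \<Longrightarrow> (A - B * K) ^\<^sub>m h *\<^sub>v v \<in> carrier_vec n"
  using mult_mat_vec_carrier pow_carrier_mat closed_loop_carrier by blast

lemma lin_state_carrier: "lin_state A B K w t \<in> carrier_vec n"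
  by (induction t) (use A B K w in auto)

lemma lin_state_Suc: "lin_state A B K w (Suc t) = (A - B * K) *\<^sub>v lin_state A B K w t + w t"
proof -
  have x: "lin_state A B K w t \<in> carrier_vec n"
    by (rule lin_state_carrier)
  have "(A - B * K) *\<^sub>v lin_state A B K w t = A *\<^sub>v lin_state A B K w t - B *\<^sub>v (K *\<^sub>v lin_state A B K w t)"
    using A B K x by (rule closed_loop_mult_mat_vec)
  moreover have "B *\<^sub>v (- (K *\<^sub>v lin_state A B K w t)) = - (B *\<^sub>v (K *\<^sub>v lin_state A B K w t))"
    using B K by (intro mult_mat_vec_uminus carrier_vecI) simp
  ultimately show ?thesis
    using A B K x carrier_vecD[OF w] by (intro eq_vecI) auto
qed

lemma lin_state_add:
  "lin_state A B K w (s + h) =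
     (A - B * K) ^\<^sub>m h *\<^sub>v lin_state A B K w s + trunc_state (A - B * K) h w (s + h)"
proof (induction h arbitrary: s)
  case 0
  show ?case
    using closed_loop_carrier lin_state_carrier carrier_matD[OF B] by simp
next
  case (Suc h)
  let ?F = "A - B * K" and ?x = "lin_state A B K w s"
  have F: "?F \<in> carrier_mat n n"
    by (rule closed_loop_carrier)
  have carrier: "?F ^\<^sub>m Suc h *\<^sub>v ?x \<in> carrier_vec n" "?F ^\<^sub>m h *\<^sub>v w s \<in> carrier_vec n"
    "trunc_state ?F h w (s + Suc h) \<in> carrier_vec n"
    by (rule closed_loop_pow_mult_carrier[OF lin_state_carrier] closed_loop_pow_mult_carrier[OF w]
        trunc_state_carrier[of _ n w, OF F w])+
  have "lin_state A B K w (s + Suc h) =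
      ?F ^\<^sub>m h *\<^sub>v lin_state A B K w (Suc s) + trunc_state ?F h w (s + Suc h)"
    using Suc[of "Suc s"] by (simp only: add_Suc_shift)
  also have "lin_state A B K w (Suc s) = ?F *\<^sub>v ?x + w s"
    by (rule lin_state_Suc)
  also have "?F ^\<^sub>m h *\<^sub>v (?F *\<^sub>v ?x + w s) = ?F ^\<^sub>m Suc h *\<^sub>v ?x + ?F ^\<^sub>m h *\<^sub>v w s"
    using F lin_state_carrier w
    by (simp add: mult_add_distrib_mat_vec[of _ n n] assoc_mult_mat_vec[OF pow_carrier_mat[OF F] F])
  also have "\<dots> + trunc_state ?F h w (s + Suc h) =
      ?F ^\<^sub>m Suc h *\<^sub>v ?x + (trunc_state ?F h w (s + Suc h) + ?F ^\<^sub>m h *\<^sub>v w s)"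
    using carrier by (simp add: comm_add_vec[of "?F ^\<^sub>m h *\<^sub>v w s" n])
  finally show ?case
    by simp
qed

lemma lin_state_eq_trunc_state:
  assumes "t \<le> h"
  shows "lin_state A B K w t = trunc_state (A - B * K) h w t"
proof -
  have F: "A - B * K \<in> carrier_mat n n"
    by (rule closed_loop_carrier)
  have "lin_state A B K w t = trunc_state (A - B * K) t w t"
    using lin_state_add[of 0 t] trunc_state_carrier[of _ n w, OF F w]
      mult_mat_vec_zero_vec[OF pow_carrier_mat[OF F]] carrier_matD[OF A]
    by simp
  also have "\<dots> = trunc_state (A - B * K) h w t"
    using trunc_state_saturate[OF F w assms] by simp
  finally show ?thesis .
qed

lemma lin_state_minus_trunc_state:
  "h \<le> t \<Longrightarrow> lin_state A B K w t - trunc_state (A - B * K) h w t =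
     (A - B * K) ^\<^sub>m h *\<^sub>v lin_state A B K w (t - h)"
  using lin_state_add[of "t - h" h] closed_loop_pow_mult_carrier lin_state_carrier
    trunc_state_carrier[of _ n w, OF closed_loop_carrier w]
  by (simp add: add_minus_cancel_vec[of _ n])

context
  fixes \<kappa> \<gamma> wbar :: real
  assumes stable: "strongly_stable \<kappa> \<gamma> A B K" and \<kappa>: "0 \<le> \<kappa>" and \<gamma>: "0 < \<gamma>" "\<gamma> \<le> 1"
    and w_bound: "\<And>t. vnorm_inf (w t) \<le> wbar"
begin

lemma lin_state_bound: "vnorm2 (lin_state A B K w t) \<le> \<kappa>\<^sup>2 * (sqrt n * wbar) / \<gamma>"
proof (rule strongly_stable_driven_bound[OF stable A \<kappa> \<gamma>])
  show "lin_state A B K w 0 = 0\<^sub>v n"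
    using A by simp
  show "lin_state A B K w (Suc t) = (A - B * K) *\<^sub>v lin_state A B K w t + w t" for t
    by (rule lin_state_Suc)
  show "vnorm2 (w t) \<le> sqrt n * wbar" for t
    using vnorm2_le_sqrt_dim_vnorm_inf[of "w t"] w_bound[of t] carrier_vecD[OF w]
    by (simp add: order_trans mult_left_mono)
qed (rule w)

lemma trunc_error_bound:
  "vnorm2 (lin_state A B K w t - trunc_state (A - B * K) h w t)
     \<le> \<kappa> ^ 4 * wbar / \<gamma> * (sqrt n * (1 - \<gamma>) ^ h)"
proof (cases "h \<le> t")
  case True
  have "vnorm2 ((A - B * K) ^\<^sub>m h *\<^sub>v lin_state A B K w (t - h))
      \<le> \<kappa>\<^sup>2 * (1 - \<gamma>) ^ h * vnorm2 (lin_state A B K w (t - h))"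
    using strongly_stable_pow_op_norm_le[OF stable A \<kappa> \<gamma>(2)] lin_state_carrier closed_loop_carrier
    by (intro op_norm_leD) auto
  also have "\<dots> \<le> \<kappa>\<^sup>2 * (1 - \<gamma>) ^ h * (\<kappa>\<^sup>2 * (sqrt n * wbar) / \<gamma>)"
    using lin_state_bound \<gamma> by (intro mult_left_mono) auto
  also have "\<dots> = \<kappa> ^ 4 * wbar / \<gamma> * (sqrt n * (1 - \<gamma>) ^ h)"
    by (simp add: power2_eq_square eval_nat_numeral mult_ac)
  finally show ?thesis
    using lin_state_minus_trunc_state[OF True] by simp
next
  case False
  have "0 \<le> wbar"
    using w_bound[of 0] vnorm_inf_nonneg order_trans by blast
  then show ?thesis
    using lin_state_eq_trunc_state[of t h] False
      minus_cancel_vec[OF trunc_state_carrier[of _ n w, OF closed_loop_carrier w]] \<kappa> \<gamma>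
    by simp
qed

end

context
  fixes Kb :: "real mat" and H :: nat
  assumes Kb: "Kb \<in> carrier_mat m n"
begin

lemma mult_trunc_state_eq_M_of_K_sum:
  assumes "j < m"
  shows "((Kb - K) *\<^sub>v trunc_state (A - B * K) h w t) $ j =
    (\<Sum>i\<in>{1..h}. if i \<le> t then (M_of_K A B Kb K i *\<^sub>v w (t - i)) $ j else 0)"
proof (induction h)
  case 0
  show ?case
    using mult_mat_vec_zero_vec[OF minus_carrier_mat[OF K], of Kb] assms carrier_matD[OF B] by simp
next
  case (Suc h)
  let ?F = "A - B * K"
  define v where "v = (if h < t then ?F ^\<^sub>m h *\<^sub>v w (t - Suc h) else 0\<^sub>v n)"
  have F: "?F \<in> carrier_mat n n" and D: "Kb - K \<in> carrier_mat m n"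
    using closed_loop_carrier minus_carrier_mat[OF K] by auto
  have v: "v \<in> carrier_vec n"
    unfolding v_def using closed_loop_pow_mult_carrier[OF w] by simp
  have "trunc_state ?F (Suc h) w t = trunc_state ?F h w t + v"
    unfolding v_def using carrier_matD[OF B] by simp
  then have "(Kb - K) *\<^sub>v trunc_state ?F (Suc h) w t = (Kb - K) *\<^sub>v trunc_state ?F h w t + (Kb - K) *\<^sub>v v"
    using trunc_state_carrier[of _ n w, OF F w] v by (simp add: mult_add_distrib_mat_vec[OF D])
  moreover have "((Kb - K) *\<^sub>v v) $ j = (if Suc h \<le> t then (M_of_K A B Kb K (Suc h) *\<^sub>v w (t - Suc h)) $ j else 0)"
    unfolding v_def M_of_K_def using assms mult_mat_vec_zero_vec[OF D]
    by (simp add: assoc_mult_mat_vec[OF D pow_carrier_mat[OF F] w])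
  ultimately have "((Kb - K) *\<^sub>v trunc_state ?F (Suc h) w t) $ j = ((Kb - K) *\<^sub>v trunc_state ?F h w t) $ j
      + (if Suc h \<le> t then (M_of_K A B Kb K (Suc h) *\<^sub>v w (t - Suc h)) $ j else 0)"
    using assms carrier_matD[OF D] by simp
  then show ?case
    unfolding Suc by simp
qed

lemma dap_u_M_of_K:
  assumes "x \<in> carrier_vec n"
  shows "dap_u Kb (M_of_K A B Kb K) H w t x = - (Kb *\<^sub>v x) + (Kb - K) *\<^sub>v trunc_state (A - B * K) H w t"
  using Kb K mult_trunc_state_eq_M_of_K_sum by (intro eq_vecI) (auto simp: dap_u_def)

lemma dap_state_carrier: "dap_state A B Kb (M_of_K A B Kb K) H w t \<in> carrier_vec n"
  by (induction t) (use A B Kb w in \<open>auto simp: dap_u_def\<close>)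

lemma closed_loop_diff: "(A - B * K) - (A - B * Kb) = B * (Kb - K)"
  using A B K Kb by (intro eq_matI) (auto simp: mult_minus_distrib_mat[OF B Kb K])

lemma gain_diff_mult_mat_vec:
  assumes v: "v \<in> carrier_vec n"
  shows "(B * (Kb - K)) *\<^sub>v v = B *\<^sub>v (Kb *\<^sub>v v) - B *\<^sub>v (K *\<^sub>v v)"
proof -
  have "(B * (Kb - K)) *\<^sub>v v = B *\<^sub>v (Kb *\<^sub>v v - K *\<^sub>v v)"
    using assoc_mult_mat_vec[OF B minus_carrier_mat[OF K] v] minus_mult_distrib_mat_vec[OF Kb K v]
    by simp
  also have "\<dots> = B *\<^sub>v (Kb *\<^sub>v v) - B *\<^sub>v (K *\<^sub>v v)"
    using Kb K v by (intro mult_minus_distrib_mat_vec[OF B]) auto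
  finally show ?thesis .
qed

lemma state_gap_Suc:
  "lin_state A B K w (Suc t) - dap_state A B Kb (M_of_K A B Kb K) H w (Suc t) =
     (A - B * Kb) *\<^sub>v (lin_state A B K w t - dap_state A B Kb (M_of_K A B Kb K) H w t)
     + (B * (Kb - K)) *\<^sub>v (lin_state A B K w t - trunc_state (A - B * K) H w t)"
proof -
  let ?x = "lin_state A B K w t" and ?d = "dap_state A B Kb (M_of_K A B Kb K) H w t"
    and ?P = "trunc_state (A - B * K) H w t"
  have x: "?x \<in> carrier_vec n" and d: "?d \<in> carrier_vec n" and P: "?P \<in> carrier_vec n"
    using lin_state_carrier dap_state_carrier trunc_state_carrier[of _ n w, OF closed_loop_carrier w]
    by auto
  have G: "A - B * Kb \<in> carrier_mat n n" and BD: "B * (Kb - K) \<in> carrier_mat n n"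
    using A B Kb K by auto
  have "B *\<^sub>v (- (Kb *\<^sub>v ?d) + (Kb - K) *\<^sub>v ?P) = B *\<^sub>v (- (Kb *\<^sub>v ?d)) + B *\<^sub>v ((Kb - K) *\<^sub>v ?P)"
    using Kb d mult_mat_vec_carrier[OF minus_carrier_mat[OF K] P] by (intro mult_add_distrib_mat_vec[OF B]) auto
  also have "\<dots> = - (B *\<^sub>v (Kb *\<^sub>v ?d)) + (B * (Kb - K)) *\<^sub>v ?P"
    using B Kb d assoc_mult_mat_vec[OF B minus_carrier_mat[OF K] P]
    by (simp add: mult_mat_vec_uminus)
  finally have dap: "dap_state A B Kb (M_of_K A B Kb K) H w (Suc t) =
      A *\<^sub>v ?d + (- (B *\<^sub>v (Kb *\<^sub>v ?d)) + (B * (Kb - K)) *\<^sub>v ?P) + w t"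
    using dap_u_M_of_K[OF d] by simp
  have lin: "lin_state A B K w (Suc t) = A *\<^sub>v ?x - B *\<^sub>v (K *\<^sub>v ?x) + w t"
    using lin_state_Suc closed_loop_mult_mat_vec[OF A B K x] by simp
  show ?thesis
    unfolding lin dap mult_minus_distrib_mat_vec[OF G x d] mult_minus_distrib_mat_vec[OF BD x P]
      closed_loop_mult_mat_vec[OF A B Kb x] closed_loop_mult_mat_vec[OF A B Kb d] gain_diff_mult_mat_vec[OF x]
    using carrier_matD[OF A] carrier_matD[OF B] carrier_vecD[OF w] by (intro eq_vecI) auto
qed

lemma input_gap_eq:
  "lin_input A B K w t - dap_input A B Kb (M_of_K A B Kb K) H w t =
     (Kb - K) *\<^sub>v (lin_state A B K w t - trunc_state (A - B * K) H w t)
     - Kb *\<^sub>v (lin_state A B K w t - dap_state A B Kb (M_of_K A B Kb K) H w t)"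
proof -
  let ?x = "lin_state A B K w t" and ?d = "dap_state A B Kb (M_of_K A B Kb K) H w t"
    and ?P = "trunc_state (A - B * K) H w t"
  have x: "?x \<in> carrier_vec n" and d: "?d \<in> carrier_vec n" and P: "?P \<in> carrier_vec n"
    using lin_state_carrier dap_state_carrier trunc_state_carrier[of _ n w, OF closed_loop_carrier w]
    by auto
  have D: "Kb - K \<in> carrier_mat m n"
    using minus_carrier_mat[OF K] .
  show ?thesis
    unfolding lin_input_def dap_input_def dap_u_M_of_K[OF d] mult_minus_distrib_mat_vec[OF D x P]
      minus_mult_distrib_mat_vec[OF Kb K x] mult_minus_distrib_mat_vec[OF Kb x d]
    using carrier_matD[OF K] carrier_matD[OF Kb] by (intro eq_vecI) auto
qed

context
  fixes \<kappa> \<gamma> wbar :: real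
  assumes stable: "strongly_stable \<kappa> \<gamma> A B K" and stable_b: "strongly_stable \<kappa> \<gamma> A B Kb"
    and \<kappa>: "0 \<le> \<kappa>" and \<gamma>: "0 < \<gamma>" "\<gamma> \<le> 1" and w_bound: "\<And>t. vnorm_inf (w t) \<le> wbar"
begin

lemma state_gap_bound:
  "vnorm2 (lin_state A B K w t - dap_state A B Kb (M_of_K A B Kb K) H w t)
     \<le> 2 * \<kappa> ^ 8 * wbar / \<gamma>\<^sup>2 * (sqrt n * (1 - \<gamma>) ^ H)"
proof -
  let ?R = "\<kappa> ^ 4 * wbar / \<gamma> * (sqrt n * (1 - \<gamma>) ^ H)"
  have "op_norm_le ((A - B * K) - (A - B * Kb)) (\<kappa>\<^sup>2 + \<kappa>\<^sup>2)"
    using strongly_stable_closed_loop_op_norm_le[OF stable A \<kappa>] strongly_stable_closed_loop_op_norm_le[OF stable_b A \<kappa>]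
      closed_loop_carrier minus_carrier_mat[OF mult_carrier_mat[OF B Kb]] \<gamma>
    by (intro op_norm_le_diff) auto
  then have BD: "op_norm_le (B * (Kb - K)) (2 * \<kappa>\<^sup>2)"
    unfolding closed_loop_diff by simp
  have "vnorm2 (lin_state A B K w t - dap_state A B Kb (M_of_K A B Kb K) H w t) \<le> \<kappa>\<^sup>2 * (2 * \<kappa>\<^sup>2 * ?R) / \<gamma>"
  proof (rule strongly_stable_driven_bound[OF stable_b A \<kappa> \<gamma>])
    show "lin_state A B K w 0 - dap_state A B Kb (M_of_K A B Kb K) H w 0 = 0\<^sub>v n"
      using A by simp
    show "(B * (Kb - K)) *\<^sub>v (lin_state A B K w s - trunc_state (A - B * K) H w s) \<in> carrier_vec n" for s
      using B by (intro carrier_vecI) simp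
    show "vnorm2 ((B * (Kb - K)) *\<^sub>v (lin_state A B K w s - trunc_state (A - B * K) H w s)) \<le> 2 * \<kappa>\<^sup>2 * ?R" for s
    proof -
      have r: "lin_state A B K w s - trunc_state (A - B * K) H w s \<in> carrier_vec n"
        using lin_state_carrier trunc_state_carrier[of _ n w, OF closed_loop_carrier w] by simp
      have "vnorm2 ((B * (Kb - K)) *\<^sub>v (lin_state A B K w s - trunc_state (A - B * K) H w s))
          \<le> 2 * \<kappa>\<^sup>2 * vnorm2 (lin_state A B K w s - trunc_state (A - B * K) H w s)"
        using op_norm_leD[OF BD] r K by simp
      also have "\<dots> \<le> 2 * \<kappa>\<^sup>2 * ?R"
        by (intro mult_left_mono trunc_error_bound[OF stable \<kappa> \<gamma> w_bound]) simp
      finally show ?thesis .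
    qed
  qed (rule state_gap_Suc)
  also have "\<dots> = 2 * \<kappa> ^ 8 * wbar / \<gamma>\<^sup>2 * (sqrt n * (1 - \<gamma>) ^ H)"
    by (simp add: field_simps power2_eq_square eval_nat_numeral)
  finally show ?thesis .
qed

lemma input_gap_bound:
  "vnorm2 (lin_input A B K w t - dap_input A B Kb (M_of_K A B Kb K) H w t)
     \<le> (2 * \<kappa> ^ 9 * wbar / \<gamma>\<^sup>2 + 2 * \<kappa> ^ 5 * wbar / \<gamma>) * (sqrt n * (1 - \<gamma>) ^ H)"
proof -
  let ?x = "lin_state A B K w t" and ?d = "dap_state A B Kb (M_of_K A B Kb K) H w t"
    and ?P = "trunc_state (A - B * K) H w t"
  have x: "?x \<in> carrier_vec n" and d: "?d \<in> carrier_vec n" and P: "?P \<in> carrier_vec n"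
    using lin_state_carrier dap_state_carrier trunc_state_carrier[of _ n w, OF closed_loop_carrier w]
    by auto
  have Kb_gain: "op_norm_le Kb \<kappa>"
    by (rule strongly_stable_gain_op_norm_le[OF stable_b A])
  have D_gain: "op_norm_le (Kb - K) (\<kappa> + \<kappa>)"
    by (rule op_norm_le_diff[OF Kb_gain strongly_stable_gain_op_norm_le[OF stable A] Kb K])
  have "vnorm2 (lin_input A B K w t - dap_input A B Kb (M_of_K A B Kb K) H w t)
      \<le> vnorm2 ((Kb - K) *\<^sub>v (?x - ?P)) + vnorm2 (Kb *\<^sub>v (?x - ?d))"
    unfolding input_gap_eq using Kb K by (intro vnorm2_diff_le) simp
  also have "\<dots> \<le> (\<kappa> + \<kappa>) * vnorm2 (?x - ?P) + \<kappa> * vnorm2 (?x - ?d)"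
    using x d P Kb K by (intro add_mono op_norm_leD[OF D_gain] op_norm_leD[OF Kb_gain]) auto
  also have "\<dots> \<le> (\<kappa> + \<kappa>) * (\<kappa> ^ 4 * wbar / \<gamma> * (sqrt n * (1 - \<gamma>) ^ H))
      + \<kappa> * (2 * \<kappa> ^ 8 * wbar / \<gamma>\<^sup>2 * (sqrt n * (1 - \<gamma>) ^ H))"
    using \<kappa> by (intro add_mono mult_left_mono trunc_error_bound[OF stable \<kappa> \<gamma> w_bound] state_gap_bound)
      simp_all
  also have "\<dots> = (2 * \<kappa> ^ 9 * wbar / \<gamma>\<^sup>2 + 2 * \<kappa> ^ 5 * wbar / \<gamma>) * (sqrt n * (1 - \<gamma>) ^ H)"
    by (simp add: field_simps power2_eq_square eval_nat_numeral)
  finally show ?thesis .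
qed

end

end

end

lemma M_of_K_in_M:
  assumes A: "A \<in> carrier_mat n n" and B: "B \<in> carrier_mat n m"
    and K: "K \<in> carrier_mat m n" and Kb: "Kb \<in> carrier_mat m n"
    and stable: "strongly_stable \<kappa> \<gamma> A B K" and stable_b: "strongly_stable \<kappa> \<gamma> A B Kb"
    and \<kappa>: "0 \<le> \<kappa>" and \<gamma>: "\<gamma> \<le> 1"
  shows "in_M n m \<kappa> \<gamma> H (M_of_K A B Kb K)"
  unfolding in_M_def
proof (intro ballI conjI)
  fix i assume "i \<in> {1..H}"
  have F: "A - B * K \<in> carrier_mat n n"
    using minus_carrier_mat[OF mult_carrier_mat[OF B K]] .
  show M: "M_of_K A B Kb K i \<in> carrier_mat m n"
    unfolding M_of_K_def using mult_carrier_mat[OF minus_carrier_mat[OF K] pow_carrier_mat[OF F]] .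
  have D: "op_norm_le (Kb - K) (\<kappa> + \<kappa>)"
    by (rule op_norm_le_diff[OF strongly_stable_gain_op_norm_le[OF stable_b A]
          strongly_stable_gain_op_norm_le[OF stable A] Kb K])
  have "op_norm_le (M_of_K A B Kb K i) ((\<kappa> + \<kappa>) * (\<kappa>\<^sup>2 * (1 - \<gamma>) ^ (i - 1)))"
    unfolding M_of_K_def
  proof (rule op_norm_le_mult[OF D strongly_stable_pow_op_norm_le[OF stable A \<kappa> \<gamma>]])
    show "dim_col (Kb - K) = dim_row ((A - B * K) ^\<^sub>m (i - 1))"
      using carrier_matD[OF K] carrier_matD[OF F] by simp
  qed (use \<kappa> in simp)
  moreover have "0 \<le> (\<kappa> + \<kappa>) * (\<kappa>\<^sup>2 * (1 - \<gamma>) ^ (i - 1))"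
    using \<kappa> \<gamma> by simp
  ultimately have "mnorm_inf (M_of_K A B Kb K i) \<le> sqrt n * ((\<kappa> + \<kappa>) * (\<kappa>\<^sup>2 * (1 - \<gamma>) ^ (i - 1)))"
    using mnorm_inf_le_sqrt_dim_mult carrier_matD(2)[OF M] by metis
  then show "mnorm_inf (M_of_K A B Kb K i) \<le> 2 * sqrt n * \<kappa> ^ 3 * (1 - \<gamma>) ^ (i - 1)"
    by (simp add: power2_eq_square power3_eq_cube mult_ac)
qed

lemma gap_constants_le:
  fixes a b \<kappa> \<gamma> wbar :: real
  assumes a: "0 \<le> a" and b: "0 \<le> b" and \<kappa>: "0 \<le> \<kappa>" and \<gamma>: "0 < \<gamma>" and wbar: "0 \<le> wbar"
  defines "p \<equiv> 1 + a + b + \<kappa> + 1 / \<gamma> + wbar"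
  shows "a * (2 * \<kappa> ^ 8 * wbar / \<gamma>\<^sup>2) \<le> 4 * p ^ 13"
    and "b * (2 * \<kappa> ^ 9 * wbar / \<gamma>\<^sup>2 + 2 * \<kappa> ^ 5 * wbar / \<gamma>) \<le> 4 * p ^ 13"
proof -
  have g: "0 \<le> 1 / \<gamma>"
    using \<gamma> by simp
  have le_p: "a \<le> p" "b \<le> p" "\<kappa> \<le> p" "1 / \<gamma> \<le> p" "wbar \<le> p" and p: "1 \<le> p"
    unfolding p_def using a b \<kappa> g wbar by auto
  have pow: "x ^ k \<le> p ^ k" if "0 \<le> x" "x \<le> p" for x k
    using power_mono that by blast
  have "a * (2 * \<kappa> ^ 8 * wbar / \<gamma>\<^sup>2) = 2 * (a * (wbar * ((1 / \<gamma>)\<^sup>2 * \<kappa> ^ 8)))"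
    by (simp add: power2_eq_square field_simps)
  also have "\<dots> \<le> 2 * (p * (p * (p\<^sup>2 * p ^ 8)))"
    using a \<kappa> g wbar le_p p by (intro mult_left_mono mult_mono pow) auto
  also have "\<dots> = 2 * p ^ 12"
    by (simp add: power2_eq_square eval_nat_numeral)
  also have "\<dots> \<le> 4 * p ^ 13"
    using p power_increasing[of 12 13 p] zero_le_power[of p 13] by linarith
  finally show "a * (2 * \<kappa> ^ 8 * wbar / \<gamma>\<^sup>2) \<le> 4 * p ^ 13" .
  have "b * (2 * \<kappa> ^ 9 * wbar / \<gamma>\<^sup>2 + 2 * \<kappa> ^ 5 * wbar / \<gamma>)
      = 2 * (b * (wbar * ((1 / \<gamma>)\<^sup>2 * \<kappa> ^ 9))) + 2 * (b * (wbar * (1 / \<gamma> * \<kappa> ^ 5)))"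
    by (simp add: power2_eq_square field_simps)
  also have "\<dots> \<le> 2 * (p * (p * (p\<^sup>2 * p ^ 9))) + 2 * (p * (p * (p * p ^ 5)))"
    using b \<kappa> g wbar le_p p by (intro add_mono mult_left_mono mult_mono pow) auto
  also have "\<dots> = 2 * p ^ 13 + 2 * p ^ 8"
    by (simp add: power2_eq_square eval_nat_numeral)
  also have "\<dots> \<le> 4 * p ^ 13"
    using p power_increasing[of 8 13 p] by linarith
  finally show "b * (2 * \<kappa> ^ 9 * wbar / \<gamma>\<^sup>2 + 2 * \<kappa> ^ 5 * wbar / \<gamma>) \<le> 4 * p ^ 13" .
qed

lemma M_of_K_gap_bound:
  assumes A: "A \<in> carrier_mat n n" and B: "B \<in> carrier_mat n m"
    and K: "K \<in> carrier_mat m n" and Kb: "Kb \<in> carrier_mat m n"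
    and Dx: "Dx \<in> carrier_mat kx n" and Du: "Du \<in> carrier_mat ku m"
    and stable: "strongly_stable \<kappa> \<gamma> A B K" and stable_b: "strongly_stable \<kappa> \<gamma> A B Kb"
    and \<kappa>: "0 \<le> \<kappa>" and \<gamma>: "0 < \<gamma>" "\<gamma> \<le> 1" and w: "admissible_dist n wbar w"
  shows "max (vnorm_inf (Dx *\<^sub>v (lin_state A B K w t - dap_state A B Kb (M_of_K A B Kb K) H w t)))
      (vnorm_inf (Du *\<^sub>v (lin_input A B K w t - dap_input A B Kb (M_of_K A B Kb K) H w t)))
    \<le> 4 * (1 + mnorm_inf Dx + mnorm_inf Du + \<kappa> + 1 / \<gamma> + wbar) ^ 13 * sqrt n * (1 - \<gamma>) ^ H"
proof -
  have w_carrier: "\<And>t. w t \<in> carrier_vec n" and w_bound: "\<And>t. vnorm_inf (w t) \<le> wbar"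
    using w unfolding admissible_dist_def by auto
  have wbar: "0 \<le> wbar"
    using w_bound[of 0] vnorm_inf_nonneg order_trans by blast
  have s: "0 \<le> sqrt n * (1 - \<gamma>) ^ H"
    using \<gamma> by simp
  note constants = gap_constants_le[OF mnorm_inf_nonneg mnorm_inf_nonneg \<kappa> \<gamma>(1) wbar]
  have x: "lin_state A B K w t \<in> carrier_vec n"
    using lin_state_carrier[OF A B K w_carrier] .
  have "lin_state A B K w t - dap_state A B Kb (M_of_K A B Kb K) H w t \<in> carrier_vec (dim_col Dx)"
    using x dap_state_carrier[OF A B K w_carrier Kb] Dx by simp
  then have "vnorm_inf (Dx *\<^sub>v (lin_state A B K w t - dap_state A B Kb (M_of_K A B Kb K) H w t))
      \<le> 4 * (1 + mnorm_inf Dx + mnorm_inf Du + \<kappa> + 1 / \<gamma> + wbar) ^ 13 * (sqrt n * (1 - \<gamma>) ^ H)"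
    by (rule vnorm_inf_mult_mat_vec_le_scaled[OF _
          state_gap_bound[where w = w, OF A B K w_carrier Kb stable stable_b \<kappa> \<gamma> w_bound] constants(1) s])
  moreover have "lin_input A B K w t - dap_input A B Kb (M_of_K A B Kb K) H w t \<in> carrier_vec (dim_col Du)"
    using x K Kb Du unfolding lin_input_def dap_input_def dap_u_def by (intro minus_carrier_vec) auto
  then have "vnorm_inf (Du *\<^sub>v (lin_input A B K w t - dap_input A B Kb (M_of_K A B Kb K) H w t))
      \<le> 4 * (1 + mnorm_inf Dx + mnorm_inf Du + \<kappa> + 1 / \<gamma> + wbar) ^ 13 * (sqrt n * (1 - \<gamma>) ^ H)"
    by (rule vnorm_inf_mult_mat_vec_le_scaled[OF _
          input_gap_bound[where w = w, OF A B K w_carrier Kb stable stable_b \<kappa> \<gamma> w_bound] constants(2) s])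
  ultimately show ?thesis
    by (simp add: mult.assoc)
qed

lemma vec_le_shift_of_vnorm_inf_diff:
  fixes M :: "real mat"
  assumes M: "M \<in> carrier_mat k c" and a: "a \<in> carrier_vec c" and b: "b \<in> carrier_vec c"
    and le: "vec_le (M *\<^sub>v a) d" and diff: "vnorm_inf (M *\<^sub>v (a - b)) \<le> \<epsilon>"
  shows "vec_le (M *\<^sub>v b) (vec_shift d \<epsilon>)"
  unfolding vec_le_def vec_shift_def
proof (intro conjI allI impI)
  have d: "dim_vec d = k"
    using le M unfolding vec_le_def by simp
  then show "dim_vec (M *\<^sub>v b) = dim_vec (vec (dim_vec d) (\<lambda>i. d $ i + \<epsilon>))"
    using M by simp
  fix i assume "i < dim_vec (M *\<^sub>v b)"
  then have i: "i < k"
    using M by simp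
  have "(M *\<^sub>v a) $ i \<le> d $ i"
    using le i M unfolding vec_le_def by simp
  moreover have "(M *\<^sub>v b) $ i - (M *\<^sub>v a) $ i \<le> \<epsilon>"
    using abs_index_le_vnorm_inf[of i "M *\<^sub>v (a - b)"] diff i M a b
    by (simp add: mult_minus_distrib_mat_vec[OF M a b])
  ultimately have "(M *\<^sub>v b) $ i \<le> d $ i + \<epsilon>"
    by linarith
  then show "(M *\<^sub>v b) $ i \<le> vec (dim_vec d) (\<lambda>i. d $ i + \<epsilon>) $ i"
    using i d by simp
qed

lemma dap_loosely_safe_of_gap_bound:
  assumes A: "A \<in> carrier_mat n n" and B: "B \<in> carrier_mat n m"
    and K: "K \<in> carrier_mat m n" and Kb: "Kb \<in> carrier_mat m n"
    and Dx: "Dx \<in> carrier_mat kx n" and Du: "Du \<in> carrier_mat ku m"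
    and safe: "lin_safe T wbar Dx dx Du du A B K"
    and gap: "\<And>w t. admissible_dist n wbar w \<Longrightarrow>
      max (vnorm_inf (Dx *\<^sub>v (lin_state A B K w t - dap_state A B Kb (M_of_K A B Kb K) H w t)))
        (vnorm_inf (Du *\<^sub>v (lin_input A B K w t - dap_input A B Kb (M_of_K A B Kb K) H w t))) \<le> \<epsilon>"
  shows "dap_loosely_safe \<epsilon> T wbar Dx dx Du du A B Kb (M_of_K A B Kb K) H"
  unfolding dap_loosely_safe_def
proof (intro allI impI conjI)
  fix w t assume w: "admissible_dist (dim_row A) wbar w" and "t \<le> T"
  then have safe_t: "vec_le (Dx *\<^sub>v lin_state A B K w t) dx" "vec_le (Du *\<^sub>v lin_input A B K w t) du"
    using safe unfolding lin_safe_def by auto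
  have w_n: "admissible_dist n wbar w"
    using w A by simp
  then have w_carrier: "\<And>t. w t \<in> carrier_vec n"
    unfolding admissible_dist_def by auto
  have x: "lin_state A B K w t \<in> carrier_vec n" and d: "dap_state A B Kb (M_of_K A B Kb K) H w t \<in> carrier_vec n"
    using lin_state_carrier[OF A B K w_carrier] dap_state_carrier[OF A B K w_carrier Kb] by auto
  have u: "lin_input A B K w t \<in> carrier_vec m" and uM: "dap_input A B Kb (M_of_K A B Kb K) H w t \<in> carrier_vec m"
    using K Kb x unfolding lin_input_def dap_input_def dap_u_def by auto
  show "vec_le (Dx *\<^sub>v dap_state A B Kb (M_of_K A B Kb K) H w t) (vec_shift dx \<epsilon>)"
    using safe_t(1) gap[OF w_n, of t] by (intro vec_le_shift_of_vnorm_inf_diff[OF Dx x d]) auto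
  show "vec_le (Du *\<^sub>v dap_input A B Kb (M_of_K A B Kb K) H w t) (vec_shift du \<epsilon>)"
    using safe_t(2) gap[OF w_n, of t] by (intro vec_le_shift_of_vnorm_inf_diff[OF Du u uM]) auto
qed

lemma M_of_K_approximation:
  fixes H :: nat
  assumes A: "A \<in> carrier_mat n n" and B: "B \<in> carrier_mat n m"
    and Dx: "Dx \<in> carrier_mat kx n" and Du: "Du \<in> carrier_mat ku m"
    and Kb: "Kb \<in> carrier_mat m n" and K: "K \<in> carrier_mat m n"
    and \<gamma>: "0 < \<gamma>" "\<gamma> < 1" and \<kappa>: "1 \<le> \<kappa>"
    and stable_b: "strongly_stable \<kappa> \<gamma> A B Kb" and stable: "strongly_stable \<kappa> \<gamma> A B K"
    and safe: "lin_safe T wbar Dx dx Du du A B K"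
  defines "\<epsilon> \<equiv> 4 * (1 + mnorm_inf Dx + mnorm_inf Du + \<kappa> + 1 / \<gamma> + wbar) ^ 13 * sqrt n * (1 - \<gamma>) ^ H"
  shows "in_M n m \<kappa> \<gamma> H (M_of_K A B Kb K)"
    and "admissible_dist n wbar w \<Longrightarrow>
      max (vnorm_inf (Dx *\<^sub>v (lin_state A B K w t - dap_state A B Kb (M_of_K A B Kb K) H w t)))
        (vnorm_inf (Du *\<^sub>v (lin_input A B K w t - dap_input A B Kb (M_of_K A B Kb K) H w t))) \<le> \<epsilon>"
    and "dap_loosely_safe \<epsilon> T wbar Dx dx Du du A B Kb (M_of_K A B Kb K) H"
proof -
  have \<gamma>': "0 < \<gamma>" "\<gamma> \<le> 1" and \<kappa>': "0 \<le> \<kappa>"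
    using \<gamma> \<kappa> by auto
  note gap = M_of_K_gap_bound[OF A B K Kb Dx Du stable stable_b \<kappa>' \<gamma>']
  show "in_M n m \<kappa> \<gamma> H (M_of_K A B Kb K)"
    by (rule M_of_K_in_M[OF A B K Kb stable stable_b \<kappa>' \<gamma>'(2)])
  show "admissible_dist n wbar w \<Longrightarrow>
      max (vnorm_inf (Dx *\<^sub>v (lin_state A B K w t - dap_state A B Kb (M_of_K A B Kb K) H w t)))
        (vnorm_inf (Du *\<^sub>v (lin_input A B K w t - dap_input A B Kb (M_of_K A B Kb K) H w t))) \<le> \<epsilon>"
    unfolding \<epsilon>_def by (rule gap)
  show "dap_loosely_safe \<epsilon> T wbar Dx dx Du du A B Kb (M_of_K A B Kb K) H"
    unfolding \<epsilon>_def by (rule dap_loosely_safe_of_gap_bound[OF A B K Kb Dx Du safe gap])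
qed

theorem lemma4:
  shows "\<exists>C > (0::real). \<exists>N::nat.
    \<forall>(n::nat) (m::nat) (kx::nat) (ku::nat) (T::nat) (H::nat)
      A B Dx dx Du du Kb K (\<kappa>::real) (\<gamma>::real) (wbar::real).
      A \<in> carrier_mat n n \<and> B \<in> carrier_mat n m
      \<and> Dx \<in> carrier_mat kx n \<and> dx \<in> carrier_vec kx
      \<and> Du \<in> carrier_mat ku m \<and> du \<in> carrier_vec ku
      \<and> Kb \<in> carrier_mat m n \<and> K \<in> carrier_mat m n
      \<and> 0 < \<gamma> \<and> \<gamma> < 1 \<and> 1 \<le> \<kappa> \<and> 0 < wbar \<and> 1 \<le> H
      \<and> strongly_stable \<kappa> \<gamma> A B Kb
      \<and> strongly_stable \<kappa> \<gamma> A B K \<and> lin_safe T wbar Dx dx Du du A B K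
      \<longrightarrow>
      (let c3 = C * (1 + mnorm_inf Dx + mnorm_inf Du + \<kappa> + 1 / \<gamma> + wbar) ^ N;
           \<epsilon>3 = c3 * sqrt (real n) * (1 - \<gamma>) ^ H
       in in_M n m \<kappa> \<gamma> H (M_of_K A B Kb K)
        \<and> (\<forall>w. admissible_dist n wbar w \<longrightarrow> (\<forall>t.
             max (vnorm_inf (Dx *\<^sub>v (lin_state A B K w t - dap_state A B Kb (M_of_K A B Kb K) H w t)))
                 (vnorm_inf (Du *\<^sub>v (lin_input A B K w t - dap_input A B Kb (M_of_K A B Kb K) H w t)))
             \<le> \<epsilon>3))
        \<and> dap_loosely_safe \<epsilon>3 T wbar Dx dx Du du A B Kb (M_of_K A B Kb K) H)"
proof (intro exI[of _ "4::real"] conjI exI[of _ "13::nat"] allI impI)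
  show "(0::real) < 4"
    by simp
qed (unfold Let_def, elim conjE, intro conjI allI impI M_of_K_approximation; assumption)

end
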